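(* Let $T$ be a continuous monad on $\mathsf{Set}$, let $X,Y$ be sets, $\Gamma\in T([n])$, $\Delta\in T([m])$, $x:[n]\to X$, $y:[m]\to X$. (1) If $T(x)(\Gamma)\sqsubseteq T(y)(\Delta)$ in $T(X)$ and $f:X\to T(Y)$, then $\Gamma\mathrel{>\!\!>=}(i\mapsto f(x_i))\sqsubseteq\Delta\mathrel{>\!\!>=}(j\mapsto f(y_j))$. (2) If $f,g:X\to T(Y)$ satisfy $f\sqsubseteq g$ pointwise, then $\Gamma\mathrel{>\!\!>=}(i\mapsto f(x_i))\sqsubseteq\Gamma\mathrel{>\!\!>=}(i\mapsto g(x_i))$.
   Context: $[n]=\{1,\dots,n\}$ for $n\in\mathbb{N}$, $[\omega]=\mathbb{N}$, and $n,m\in\mathbb{N}\cup\{\omega\}$; $x_i$ denotes $x(i)$. For $\mu\in T(X)$ and $f:X\to T(Y)$, $\mu\mathrel{>\!\!>=} f$ is the Kleisli extension of $f$ applied to $\mu$. $T$ is continuous if every $T(X)$ carries an $\omega$-cppo structure $\sqsubseteq$ such that $\mathrel{>\!\!>=}$ is continuous in both arguments (functions $X\to T(Y)$ ordered pointwise). *)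

theory Defs
  imports Main "HOL-Library.FuncSet" "HOL-Library.Extended_Nat"
begin

text \<open>A monad on Set is modelled on the category whose objects are all subsets
  A of a universe type 'u and whose morphisms are functions between them.
  T(A) is the carrier TT A :: 't set; eta A is the unit at A; bind A B mu f is
  the Kleisli extension of f : A \<rightarrow> T(B) applied to mu \<in> T(A).
  le A is the order on T(A).\<close>

definition kleisli_monad ::
  "('u set \<Rightarrow> 't set) \<Rightarrow> ('u set \<Rightarrow> 'u \<Rightarrow> 't)
   \<Rightarrow> ('u set \<Rightarrow> 'u set \<Rightarrow> 't \<Rightarrow> ('u \<Rightarrow> 't) \<Rightarrow> 't) \<Rightarrow> bool" where
  "kleisli_monad TT eta bind \<longleftrightarrow>
     (\<forall>A a. a \<in> A \<longrightarrow> eta A a \<in> TT A) \<and>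
     (\<forall>A B mu f. mu \<in> TT A \<and> f \<in> A \<rightarrow> TT B \<longrightarrow> bind A B mu f \<in> TT B) \<and>
     (\<forall>A B mu f g. mu \<in> TT A \<and> (\<forall>a\<in>A. f a = g a) \<longrightarrow> bind A B mu f = bind A B mu g) \<and>
     (\<forall>A B a f. a \<in> A \<and> f \<in> A \<rightarrow> TT B \<longrightarrow> bind A B (eta A a) f = f a) \<and>
     (\<forall>A mu. mu \<in> TT A \<longrightarrow> bind A A mu (eta A) = mu) \<and>
     (\<forall>A B C mu f g. mu \<in> TT A \<and> f \<in> A \<rightarrow> TT B \<and> g \<in> B \<rightarrow> TT C \<longrightarrow>
        bind B C (bind A B mu f) g = bind A C mu (\<lambda>a. bind B C (f a) g))"

definition Tmap ::
  "('u set \<Rightarrow> 'u \<Rightarrow> 't) \<Rightarrow> ('u set \<Rightarrow> 'u set \<Rightarrow> 't \<Rightarrow> ('u \<Rightarrow> 't) \<Rightarrow> 't)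
   \<Rightarrow> 'u set \<Rightarrow> 'u set \<Rightarrow> ('u \<Rightarrow> 'u) \<Rightarrow> 't \<Rightarrow> 't" where
  "Tmap eta bind A B h mu = bind A B mu (\<lambda>a. eta B (h a))"

definition omega_chain :: "('t \<Rightarrow> 't \<Rightarrow> bool) \<Rightarrow> 't set \<Rightarrow> (nat \<Rightarrow> 't) \<Rightarrow> bool" where
  "omega_chain le C c \<longleftrightarrow> (\<forall>k. c k \<in> C) \<and> (\<forall>k. le (c k) (c (Suc k)))"

definition is_lub_in :: "('t \<Rightarrow> 't \<Rightarrow> bool) \<Rightarrow> 't set \<Rightarrow> (nat \<Rightarrow> 't) \<Rightarrow> 't \<Rightarrow> bool" where
  "is_lub_in le C c l \<longleftrightarrow> l \<in> C \<and> (\<forall>k. le (c k) l) \<and>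
     (\<forall>u\<in>C. (\<forall>k. le (c k) u) \<longrightarrow> le l u)"

definition omega_cppo :: "('t \<Rightarrow> 't \<Rightarrow> bool) \<Rightarrow> 't set \<Rightarrow> bool" where
  "omega_cppo le C \<longleftrightarrow>
     (\<forall>x\<in>C. le x x) \<and>
     (\<forall>x\<in>C. \<forall>y\<in>C. le x y \<and> le y x \<longrightarrow> x = y) \<and>
     (\<forall>x\<in>C. \<forall>y\<in>C. \<forall>z\<in>C. le x y \<and> le y z \<longrightarrow> le x z) \<and>
     (\<exists>b\<in>C. \<forall>x\<in>C. le b x) \<and>
     (\<forall>c. omega_chain le C c \<longrightarrow> (\<exists>l. is_lub_in le C c l))"

definition continuous_monad ::
  "('u set \<Rightarrow> 't set) \<Rightarrow> ('u set \<Rightarrow> 'u \<Rightarrow> 't)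
   \<Rightarrow> ('u set \<Rightarrow> 'u set \<Rightarrow> 't \<Rightarrow> ('u \<Rightarrow> 't) \<Rightarrow> 't)
   \<Rightarrow> ('u set \<Rightarrow> 't \<Rightarrow> 't \<Rightarrow> bool) \<Rightarrow> bool" where
  "continuous_monad TT eta bind le \<longleftrightarrow>
     kleisli_monad TT eta bind \<and>
     (\<forall>A. omega_cppo (le A) (TT A)) \<and>
     \<comment> \<open>continuity in the first argument\<close>
     (\<forall>A B f mu nu. f \<in> A \<rightarrow> TT B \<and> mu \<in> TT A \<and> nu \<in> TT A \<and> le A mu nu \<longrightarrow>
        le B (bind A B mu f) (bind A B nu f)) \<and>
     (\<forall>A B f c l. f \<in> A \<rightarrow> TT B \<and> omega_chain (le A) (TT A) c \<and> is_lub_in (le A) (TT A) c l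
        \<longrightarrow> is_lub_in (le B) (TT B) (\<lambda>k. bind A B (c k) f) (bind A B l f)) \<and>
     \<comment> \<open>continuity in the second argument (pointwise order on A \<rightarrow> T(B))\<close>
     (\<forall>A B mu f g. mu \<in> TT A \<and> f \<in> A \<rightarrow> TT B \<and> g \<in> A \<rightarrow> TT B \<and> (\<forall>a\<in>A. le B (f a) (g a))
        \<longrightarrow> le B (bind A B mu f) (bind A B mu g)) \<and>
     (\<forall>A B mu c l. mu \<in> TT A \<and> (\<forall>k. c k \<in> A \<rightarrow> TT B) \<and> l \<in> A \<rightarrow> TT B \<and>
        (\<forall>a\<in>A. omega_chain (le B) (TT B) (\<lambda>k. c k a) \<and> is_lub_in (le B) (TT B) (\<lambda>k. c k a) (l a))
        \<longrightarrow> is_lub_in (le B) (TT B) (\<lambda>k. bind A B mu (c k)) (bind A B mu l))"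

text \<open>[n] = {1..n} for n \<in> \<nat> \<union> {\<omega>}, embedded into the universe nat + 'a.\<close>
definition idx :: "enat \<Rightarrow> nat set" where
  "idx n = {i. 1 \<le> i \<and> enat i \<le> n}"

definition idxU :: "enat \<Rightarrow> (nat + 'a) set" where
  "idxU n = Inl ` idx n"

end

theory Submission
  imports Defs
begin

text \<open>Since T(h) \<mu> = \<mu> >>= \<eta> \<circ> h, associativity and the left unit law give
  T(h) \<mu> >>= f = \<mu> >>= f \<circ> h. Part (1) is therefore monotonicity of >>= in its first
  argument applied to T(x) \<Gamma> \<sqsubseteq> T(y) \<Delta>, and part (2) is monotonicity in its second
  argument applied to f \<circ> x \<sqsubseteq> g \<circ> x.\<close>

lemma kleisli_monad_eta_in:
  "kleisli_monad TT eta bind \<Longrightarrow> a \<in> A \<Longrightarrow> eta A a \<in> TT A"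
  unfolding kleisli_monad_def by simp

lemma kleisli_monad_bind_in:
  "kleisli_monad TT eta bind \<Longrightarrow> mu \<in> TT A \<Longrightarrow> f \<in> A \<rightarrow> TT B \<Longrightarrow> bind A B mu f \<in> TT B"
  unfolding kleisli_monad_def by simp

lemma kleisli_monad_bind_cong:
  "kleisli_monad TT eta bind \<Longrightarrow> mu \<in> TT A \<Longrightarrow> (\<And>a. a \<in> A \<Longrightarrow> f a = g a)
    \<Longrightarrow> bind A B mu f = bind A B mu g"
  unfolding kleisli_monad_def by simp

lemma kleisli_monad_bind_eta_left:
  "kleisli_monad TT eta bind \<Longrightarrow> a \<in> A \<Longrightarrow> f \<in> A \<rightarrow> TT B \<Longrightarrow> bind A B (eta A a) f = f a"
  unfolding kleisli_monad_def by simp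

lemma kleisli_monad_bind_assoc:
  "kleisli_monad TT eta bind \<Longrightarrow> mu \<in> TT A \<Longrightarrow> f \<in> A \<rightarrow> TT B \<Longrightarrow> g \<in> B \<rightarrow> TT C \<Longrightarrow>
    bind B C (bind A B mu f) g = bind A C mu (\<lambda>a. bind B C (f a) g)"
  unfolding kleisli_monad_def by simp

lemma kleisli_monad_eta_funcset:
  "kleisli_monad TT eta bind \<Longrightarrow> h \<in> A \<rightarrow> B \<Longrightarrow> (\<lambda>a. eta B (h a)) \<in> A \<rightarrow> TT B"
  by (auto intro: kleisli_monad_eta_in)

lemma Tmap_in:
  assumes K: "kleisli_monad TT eta bind" and "mu \<in> TT A" and "h \<in> A \<rightarrow> B"
  shows "Tmap eta bind A B h mu \<in> TT B"
  unfolding Tmap_def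
  using assms by (intro kleisli_monad_bind_in[OF K] kleisli_monad_eta_funcset[OF K])

lemma bind_Tmap:
  assumes K: "kleisli_monad TT eta bind"
    and mu: "mu \<in> TT A" and h: "h \<in> A \<rightarrow> B" and f: "f \<in> B \<rightarrow> TT C"
  shows "bind B C (Tmap eta bind A B h mu) f = bind A C mu (\<lambda>a. f (h a))"
proof -
  note eta_h = kleisli_monad_eta_funcset[OF K h]
  have "bind B C (Tmap eta bind A B h mu) f = bind A C mu (\<lambda>a. bind B C (eta B (h a)) f)"
    unfolding Tmap_def using kleisli_monad_bind_assoc[OF K mu eta_h f] .
  also have "\<dots> = bind A C mu (\<lambda>a. f (h a))"
    using h by (intro kleisli_monad_bind_cong[OF K mu] kleisli_monad_bind_eta_left[OF K _ f]) auto
  finally show ?thesis .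
qed

lemma continuous_monad_kleisli_monad:
  "continuous_monad TT eta bind le \<Longrightarrow> kleisli_monad TT eta bind"
  unfolding continuous_monad_def by simp

lemma continuous_monad_bind_mono_left:
  "continuous_monad TT eta bind le \<Longrightarrow> f \<in> A \<rightarrow> TT B \<Longrightarrow> mu \<in> TT A \<Longrightarrow> nu \<in> TT A \<Longrightarrow>
    le A mu nu \<Longrightarrow> le B (bind A B mu f) (bind A B nu f)"
  unfolding continuous_monad_def by simp

lemma continuous_monad_bind_mono_right:
  "continuous_monad TT eta bind le \<Longrightarrow> mu \<in> TT A \<Longrightarrow> f \<in> A \<rightarrow> TT B \<Longrightarrow> g \<in> A \<rightarrow> TT B \<Longrightarrow>
    (\<And>a. a \<in> A \<Longrightarrow> le B (f a) (g a)) \<Longrightarrow> le B (bind A B mu f) (bind A B mu g)"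
  unfolding continuous_monad_def by simp

lemma continuous_monad_bind_mono_Tmap:
  assumes T: "continuous_monad TT eta bind le"
    and mu: "mu \<in> TT A" and nu: "nu \<in> TT A'"
    and h: "h \<in> A \<rightarrow> X" and k: "k \<in> A' \<rightarrow> X" and f: "f \<in> X \<rightarrow> TT Y"
    and le_Tmap: "le X (Tmap eta bind A X h mu) (Tmap eta bind A' X k nu)"
  shows "le Y (bind A Y mu (\<lambda>a. f (h a))) (bind A' Y nu (\<lambda>a. f (k a)))"
proof -
  note K = continuous_monad_kleisli_monad[OF T]
  have "le Y (bind X Y (Tmap eta bind A X h mu) f) (bind X Y (Tmap eta bind A' X k nu) f)"
    using continuous_monad_bind_mono_left[OF T f Tmap_in[OF K mu h] Tmap_in[OF K nu k] le_Tmap] .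
  then show ?thesis
    unfolding bind_Tmap[OF K mu h f] bind_Tmap[OF K nu k f] .
qed

lemma idxU_projl_funcset:
  "\<forall>i\<in>idx n. x i \<in> X \<Longrightarrow> (\<lambda>u. x (projl u)) \<in> idxU n \<rightarrow> X"
  unfolding idxU_def by auto

theorem proposition5p15:
  fixes TT :: "(nat + 'a) set \<Rightarrow> 't set"
    and eta :: "(nat + 'a) set \<Rightarrow> nat + 'a \<Rightarrow> 't"
    and bind :: "(nat + 'a) set \<Rightarrow> (nat + 'a) set \<Rightarrow> 't \<Rightarrow> (nat + 'a \<Rightarrow> 't) \<Rightarrow> 't"
    and le :: "(nat + 'a) set \<Rightarrow> 't \<Rightarrow> 't \<Rightarrow> bool"
    and X Y :: "(nat + 'a) set"
    and n m :: enat
    and \<Gamma> \<Delta> :: 't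
    and x y :: "nat \<Rightarrow> nat + 'a"
  assumes T: "continuous_monad TT eta bind le"
    and \<Gamma>: "\<Gamma> \<in> TT (idxU n)"
    and \<Delta>: "\<Delta> \<in> TT (idxU m)"
    and x: "\<forall>i\<in>idx n. x i \<in> X"
    and y: "\<forall>j\<in>idx m. y j \<in> X"
  shows "(le X (Tmap eta bind (idxU n) X (\<lambda>u. x (projl u)) \<Gamma>)
               (Tmap eta bind (idxU m) X (\<lambda>u. y (projl u)) \<Delta>)
          \<longrightarrow> (\<forall>f. f \<in> X \<rightarrow> TT Y \<longrightarrow>
                 le Y (bind (idxU n) Y \<Gamma> (\<lambda>u. f (x (projl u))))
                      (bind (idxU m) Y \<Delta> (\<lambda>u. f (y (projl u))))))
       \<and> (\<forall>f g. f \<in> X \<rightarrow> TT Y \<and> g \<in> X \<rightarrow> TT Y \<and> (\<forall>a\<in>X. le Y (f a) (g a)) \<longrightarrow>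
                 le Y (bind (idxU n) Y \<Gamma> (\<lambda>u. f (x (projl u))))
                      (bind (idxU n) Y \<Gamma> (\<lambda>u. g (x (projl u)))))"
proof -
  have x_funcset: "(\<lambda>u. x (projl u)) \<in> idxU n \<rightarrow> X"
    and y_funcset: "(\<lambda>u. y (projl u)) \<in> idxU m \<rightarrow> X"
    using x y by (simp_all add: idxU_projl_funcset)
  show ?thesis
  proof (intro conjI impI allI)
    fix f
    assume "le X (Tmap eta bind (idxU n) X (\<lambda>u. x (projl u)) \<Gamma>)
                 (Tmap eta bind (idxU m) X (\<lambda>u. y (projl u)) \<Delta>)"
      and "f \<in> X \<rightarrow> TT Y"
    then show "le Y (bind (idxU n) Y \<Gamma> (\<lambda>u. f (x (projl u))))
                    (bind (idxU m) Y \<Delta> (\<lambda>u. f (y (projl u))))"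
      using continuous_monad_bind_mono_Tmap[OF T \<Gamma> \<Delta> x_funcset y_funcset] by blast
  next
    fix f g
    assume "f \<in> X \<rightarrow> TT Y \<and> g \<in> X \<rightarrow> TT Y \<and> (\<forall>a\<in>X. le Y (f a) (g a))"
    then show "le Y (bind (idxU n) Y \<Gamma> (\<lambda>u. f (x (projl u))))
                    (bind (idxU n) Y \<Gamma> (\<lambda>u. g (x (projl u))))"
      using x_funcset by (intro continuous_monad_bind_mono_right[OF T \<Gamma>]) auto
  qed
qed

end
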